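(* If a Möbius transformation of $\mathcal A_2^{(0,1)}\cup\{\infty\}$ fixes each of $-e_2$, $e_2$, $0$ and $\infty$, then its Vahlen matrices are of the form $\pm\begin{pmatrix}a&0\\0&a^{-1}\end{pmatrix}$ with $a\in\mathbb R+\mathbb Re_1$ and $|a|=1$.
   Context: $\mathcal A_2$ is the real associative algebra generated by $e_1,e_2$ with $e_1^2=e_2^2=-1$, $e_1e_2=-e_2e_1$; for $a=a_0+a_1e_1+a_2e_2+a_{12}e_1e_2$, $|a|^2=a_0^2+a_1^2+a_2^2+a_{12}^2$ and $a^*=a_0+a_1e_1+a_2e_2-a_{12}e_1e_2$. $\mathcal A_2^{(0,1)}=\mathbb R+\mathbb Re_1+\mathbb Re_2$. A Vahlen matrix is $\begin{pmatrix}a&b\\c&d\end{pmatrix}$ with $a,b,c,d\in\mathcal A_2$, $ad^*-bc^*=1$ and $ab^*,cd^*\in\mathcal A_2^{(0,1)}$; it acts by $x\mapsto(ax+b)(cx+d)^{-1}$, $\infty\mapsto ac^{-1}$. The Möbius transformations of $\mathcal A_2^{(0,1)}\cup\{\infty\}$ are exactly these maps, each given by exactly two Vahlen matrices $\pm A$. *)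

theory Defs
  imports Complex_Main
begin

text \<open>The algebra A_2: elements a0 + a1 e1 + a2 e2 + a12 e1e2, with
  e1^2 = e2^2 = -1 and e1 e2 = - e2 e1.\<close>

datatype cl2 = Cl2 (cl0: real) (cl1: real) (cl2: real) (cl12: real)

instantiation cl2 :: "{zero, one, plus, minus, uminus, times, inverse}"
begin

definition zero_cl2 :: cl2 where "zero_cl2 = Cl2 0 0 0 0"
definition one_cl2 :: cl2 where "one_cl2 = Cl2 1 0 0 0"
definition plus_cl2 :: "cl2 \<Rightarrow> cl2 \<Rightarrow> cl2" where
  "plus_cl2 a b = Cl2 (cl0 a + cl0 b) (cl1 a + cl1 b) (cl2 a + cl2 b) (cl12 a + cl12 b)"
definition uminus_cl2 :: "cl2 \<Rightarrow> cl2" where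
  "uminus_cl2 a = Cl2 (- cl0 a) (- cl1 a) (- cl2 a) (- cl12 a)"
definition minus_cl2 :: "cl2 \<Rightarrow> cl2 \<Rightarrow> cl2" where
  "minus_cl2 a b = Cl2 (cl0 a - cl0 b) (cl1 a - cl1 b) (cl2 a - cl2 b) (cl12 a - cl12 b)"
text \<open>Product determined by e1^2 = e2^2 = -1, e1 e2 = - e2 e1 (e12 = e1 e2).\<close>
definition times_cl2 :: "cl2 \<Rightarrow> cl2 \<Rightarrow> cl2" where
  "times_cl2 a b = Cl2
     (cl0 a * cl0 b - cl1 a * cl1 b - cl2 a * cl2 b - cl12 a * cl12 b)
     (cl0 a * cl1 b + cl1 a * cl0 b + cl2 a * cl12 b - cl12 a * cl2 b)
     (cl0 a * cl2 b - cl1 a * cl12 b + cl2 a * cl0 b + cl12 a * cl1 b)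
     (cl0 a * cl12 b + cl1 a * cl2 b - cl2 a * cl1 b + cl12 a * cl0 b)"
text \<open>Multiplicative inverse (every nonzero element is invertible; inverse 0 = 0).\<close>
definition inverse_cl2 :: "cl2 \<Rightarrow> cl2" where
  "inverse_cl2 a = (let n = (cl0 a)^2 + (cl1 a)^2 + (cl2 a)^2 + (cl12 a)^2 in
     Cl2 (cl0 a / n) (- cl1 a / n) (- cl2 a / n) (- cl12 a / n))"
definition divide_cl2 :: "cl2 \<Rightarrow> cl2 \<Rightarrow> cl2" where
  "divide_cl2 a b = a * inverse b"

instance ..
end

definition e1 :: cl2 where "e1 = Cl2 0 1 0 0"
definition e2 :: cl2 where "e2 = Cl2 0 0 1 0"

definition cl_abs :: "cl2 \<Rightarrow> real" where
  "cl_abs a = sqrt ((cl0 a)^2 + (cl1 a)^2 + (cl2 a)^2 + (cl12 a)^2)"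

definition cl_star :: "cl2 \<Rightarrow> cl2" where
  "cl_star a = Cl2 (cl0 a) (cl1 a) (cl2 a) (- cl12 a)"

text \<open>Membership in A_2^(0,1) = R + R e1 + R e2\<close>
definition paravector :: "cl2 \<Rightarrow> bool" where
  "paravector x \<longleftrightarrow> cl12 x = 0"

definition vahlen :: "cl2 \<Rightarrow> cl2 \<Rightarrow> cl2 \<Rightarrow> cl2 \<Rightarrow> bool" where
  "vahlen a b c d \<longleftrightarrow> a * cl_star d - b * cl_star c = 1
     \<and> paravector (a * cl_star b) \<and> paravector (c * cl_star d)"

text \<open>Action on A_2^(0,1) \<union> {\<infinity>}; None represents \<infinity>.\<close>
definition mob :: "cl2 \<Rightarrow> cl2 \<Rightarrow> cl2 \<Rightarrow> cl2 \<Rightarrow> cl2 option \<Rightarrow> cl2 option" where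
  "mob a b c d p = (case p of
      None \<Rightarrow> (if c = 0 then None else Some (a * inverse c))
    | Some x \<Rightarrow> (if c * x + d = 0 then None
                 else Some ((a * x + b) * inverse (c * x + d))))"

end

theory Submission
  imports Defs
begin

text \<open>\<A>_2 is the quaternion algebra, so it is a division ring. Fixing \<infinity> forces c = 0 and
  fixing 0 then forces b = 0; fixing e_2 says a e_2 = e_2 d, i.e. d is a with its e_1 and e_1e_2
  components negated. The Vahlen condition a d^* = 1 now reads componentwise
  a_0 a_2 = a_1 a_12, a_0 a_12 = -a_1 a_2 and a_0^2 + a_1^2 - a_2^2 - a_12^2 = 1, which leaves
  only a = a_0 + a_1 e_1 with a_0^2 + a_1^2 = 1 and d = a^{-1}.\<close>

lemma cl2_eq_iff:
  "x = y \<longleftrightarrow> cl0 x = cl0 y \<and> cl1 x = cl1 y \<and> cl2 x = cl2 y \<and> cl12 x = cl12 y"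
  by (cases x; cases y) auto

lemma cl2_norm_pos:
  assumes "x \<noteq> 0"
  shows "(cl0 x)\<^sup>2 + (cl1 x)\<^sup>2 + (cl2 x)\<^sup>2 + (cl12 x)\<^sup>2 > 0"
proof -
  have "cl0 x \<noteq> 0 \<or> cl1 x \<noteq> 0 \<or> cl2 x \<noteq> 0 \<or> cl12 x \<noteq> 0"
    using assms by (simp add: cl2_eq_iff zero_cl2_def)
  then show ?thesis
    by (auto simp: add_pos_nonneg add_nonneg_pos)
qed

instance cl2 :: division_ring
proof
  fix x :: cl2
  assume "x \<noteq> 0"
  obtain x0 x1 x2 x3 where x: "x = Cl2 x0 x1 x2 x3"
    by (cases x)
  define n where "n = x0\<^sup>2 + x1\<^sup>2 + x2\<^sup>2 + x3\<^sup>2"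
  have "n \<noteq> 0"
    using cl2_norm_pos[OF \<open>x \<noteq> 0\<close>] by (simp add: x n_def)
  then have "x0 * x0 / n + x1 * x1 / n + x2 * x2 / n + x3 * x3 / n = 1"
    by (simp add: n_def power2_eq_square add_divide_distrib[symmetric])
  then show "inverse x * x = 1" "x * inverse x = 1"
    by (simp_all add: x cl2_eq_iff times_cl2_def inverse_cl2_def one_cl2_def Let_def
        flip: n_def)
qed (simp_all add: cl2_eq_iff plus_cl2_def minus_cl2_def uminus_cl2_def times_cl2_def
    zero_cl2_def one_cl2_def inverse_cl2_def divide_cl2_def algebra_simps)

lemma mob_fixes_infinity_iff: "mob a b c d None = None \<longleftrightarrow> c = 0"
  by (simp add: mob_def)

lemma mob_affine_Some_iff:
  "mob a b 0 d (Some x) = Some y \<longleftrightarrow> d \<noteq> 0 \<and> a * x + b = y * d"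
proof (cases "d = 0")
  case False
  have "(a * x + b) * inverse d = y \<longleftrightarrow> a * x + b = y * d"
  proof
    assume "(a * x + b) * inverse d = y"
    then have "(a * x + b) * inverse d * d = y * d" by simp
    then show "a * x + b = y * d" using False by (simp add: mult.assoc)
  next
    assume "a * x + b = y * d"
    then show "(a * x + b) * inverse d = y" using False by (simp add: mult.assoc)
  qed
  with False show ?thesis by (simp add: mob_def)
qed (simp add: mob_def)

lemma mult_e2_eq_e2_mult_iff:
  "a * e2 = e2 * d \<longleftrightarrow> d = Cl2 (cl0 a) (- cl1 a) (cl2 a) (- cl12 a)"
  by (auto simp: cl2_eq_iff e2_def times_cl2_def)

lemma twisted_conj_right_inverse:
  assumes "a * Cl2 (cl0 a) (- cl1 a) (cl2 a) (cl12 a) = 1"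
  shows "cl2 a = 0" "cl12 a = 0" "(cl0 a)\<^sup>2 + (cl1 a)\<^sup>2 = 1"
proof -
  obtain a0 a1 a2 a3 where a: "a = Cl2 a0 a1 a2 a3"
    by (cases a)
  from assms have norm: "a0 * a0 + a1 * a1 - a2 * a2 - a3 * a3 = 1"
    and e2: "a0 * a2 = a1 * a3" and e12: "a0 * a3 = - (a1 * a2)"
    by (auto simp: a cl2_eq_iff times_cl2_def one_cl2_def algebra_simps)
  have pos: "a0 * a0 + a1 * a1 > 0"
    using norm by (smt (verit) zero_le_square)
  have "a2 * (a0 * a0 + a1 * a1) = 0" "a3 * (a0 * a0 + a1 * a1) = 0"
    using e2 e12 by algebra+
  with pos have "a2 = 0" "a3 = 0"
    by (metis mult_eq_0_iff less_irrefl)+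
  with norm show "cl2 a = 0" "cl12 a = 0" "(cl0 a)\<^sup>2 + (cl1 a)\<^sup>2 = 1"
    by (simp_all add: a power2_eq_square)
qed

lemma inverse_unit_in_span_1_e1:
  assumes "cl2 u = 0" "cl12 u = 0" "(cl0 u)\<^sup>2 + (cl1 u)\<^sup>2 = 1"
  shows "inverse u = Cl2 (cl0 u) (- cl1 u) 0 0"
  using assms by (simp add: inverse_cl2_def Let_def)

theorem proposition3p4:
  fixes a b c d :: cl2
  assumes "vahlen a b c d"
    and "mob a b c d (Some (- e2)) = Some (- e2)"
    and "mob a b c d (Some e2) = Some e2"
    and "mob a b c d (Some 0) = Some 0"
    and "mob a b c d None = None"
  shows "\<exists>u. cl2 u = 0 \<and> cl12 u = 0 \<and> cl_abs u = 1 \<and>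
           ((a, b, c, d) = (u, 0, 0, inverse u) \<or> (a, b, c, d) = (- u, 0, 0, - inverse u))"
proof -
  have c: "c = 0"
    using assms(5) by (simp add: mob_fixes_infinity_iff)
  have b: "b = 0"
    using assms(4) by (simp add: c mob_affine_Some_iff)
  have d: "d = Cl2 (cl0 a) (- cl1 a) (cl2 a) (- cl12 a)"
    using assms(3) by (simp add: b c mob_affine_Some_iff mult_e2_eq_e2_mult_iff)
  have "a * Cl2 (cl0 a) (- cl1 a) (cl2 a) (cl12 a) = 1"
    using assms(1) by (simp add: vahlen_def b c d cl_star_def)
  note unit = twisted_conj_right_inverse[OF this]
  have "cl_abs a = 1"
    using unit by (simp add: cl_abs_def)
  moreover have "d = inverse a"
    using unit by (simp add: d inverse_unit_in_span_1_e1)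
  ultimately show ?thesis
    using unit b c by blast
qed

end
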